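(* Let $M\ge 2$ be an integer. Take all $M-1$ identifiers of one group (anchor position $g$) and one identifier from a different group (anchor position $g'\neq g$). Then the $M\times M$ integer matrix whose rows are the corresponding coefficient vectors $\big(2^{\,M-1-r_1},\dots,2^{\,M-1-r_M}\big)$ has rank $M$ (over $\mathbb{Q}$), i.e. the encoded packet from the different group is linearly independent of the encoded packets of the group.
   Context: A batch of $M$ data packets $c_1,\dots,c_M$ is encoded as follows: an encoded packet is specified by an identifier $(r_1,\dots,r_M)$ of nonnegative integers; each packet $c_m$ is padded with $r_m$ zero bits at its head (and zeros at its tail so all have equal length), which in ordinary integer arithmetic amounts to forming $2^{r_{\max}-r_m}c_m$ with $r_{\max}=\max_m r_m$, and the padded packets are XORed. The coefficient vector of the encoded packet is $(2^{r_{\max}-r_1},\dots,2^{r_{\max}-r_M})$, and ranks are computed in ordinary (rational) arithmetic. In the (first-round) construction, every identifier is a bijection $\{1,\dots,M\}\to\{0,1,\dots,M-1\}$ (so $r_{\max}=M-1$), and the identifiers are arranged into $M$ groups indexed by an anchor position $g\in\{1,\dots,M\}$: the group with anchor position $g$ consists of the $M-1$ identifiers with $r_g=0$ whose entries at the positions other than $g$, read in increasing order of position, form the cyclic right shifts by $k=0,1,\dots,M-2$ of $(1,2,\dots,M-1)$. For example, the group with anchor $1$ is $(0,1,2,\dots,M-1),(0,M-1,1,\dots,M-2),\dots,(0,2,3,\dots,M-1,1)$, and the group with anchor $2$ starts with $(1,0,2,3,\dots,M-1)$. *)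

theory Defs
  imports "Jordan_Normal_Form.DL_Rank"
begin

text \<open>Identifier of the group with anchor position g (positions 1..M), shift k (0 <= k <= M-2),
  evaluated at position p: r_g = 0, and the positions other than g, read in increasing order
  (index j = 0..M-2), carry the cyclic right shift by k of (1,2,...,M-1),
  i.e. the entry at index j is 1 + ((j - k) mod (M-1)).\<close>
definition ident :: "nat \<Rightarrow> nat \<Rightarrow> nat \<Rightarrow> nat \<Rightarrow> nat" where
  "ident M g k p =
     (if p = g then 0
      else (let j = (if p < g then p - 1 else p - 2)
            in 1 + nat ((int j - int k) mod int (M - 1))))"

definition coef :: "nat \<Rightarrow> (nat \<Rightarrow> nat) \<Rightarrow> nat \<Rightarrow> rat" where
  "coef M r p = 2 ^ (M - 1 - r p)"

text \<open>Row/column indices are 0-based; column j is position j+1.\<close>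
definition code_matrix :: "nat \<Rightarrow> nat \<Rightarrow> nat \<Rightarrow> nat \<Rightarrow> rat mat" where
  "code_matrix M g g' k' =
     mat M M (\<lambda>(i, j). if i < M - 1 then coef M (ident M g i) (j + 1)
                       else coef M (ident M g' k') (j + 1))"

end

theory Submission
  imports Defs
begin

text \<open>On the columns other than its anchor, the group with anchor g is a circulant whose rows are
  the cyclic shifts of (2^(M-2), ..., 2, 1), while its anchor column is constantly 2^(M-1).
  Doubling a row of the circulant and subtracting it from the next one leaves a single nonzero
  entry 1 - 2^(M-1) on the diagonal, so a kernel vector of the group rows is constant off the
  anchor, with constant c satisfying (2^(M-1) - 1) c = -2^(M-1) x for the anchor coordinate x.
  Every identifier's coefficients sum to 2^M - 1, but the foreign identifier has an entry
  b < 2^(M-1) in the anchor column; on such a vector its row evaluates, up to the factor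
  2^(M-1) - 1, to x (2^M - 1)(b - 2^(M-1)). Hence x = 0 and the kernel is trivial.\<close>

definition cyclic_offset :: "nat \<Rightarrow> nat \<Rightarrow> nat \<Rightarrow> nat" where
  "cyclic_offset N k j = nat ((int j - int k) mod int N)"

lemma cyclic_offset_less: "N > 0 \<Longrightarrow> cyclic_offset N k j < N"
  by (simp add: cyclic_offset_def nat_less_iff)

lemma bij_betw_cyclic_offset:
  assumes "N > 0"
  shows "bij_betw (cyclic_offset N k) {..<N} {..<N}"
proof -
  have "inj_on (cyclic_offset N k) {..<N}"
  proof
    fix a b assume "a \<in> {..<N}" "b \<in> {..<N}" "cyclic_offset N k a = cyclic_offset N k b"
    then have "(int a - int k) mod int N = (int b - int k) mod int N"
      using assms by (simp add: cyclic_offset_def eq_nat_nat_iff)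
    then have "(int a - int k + int k) mod int N = (int b - int k + int k) mod int N"
      by (rule mod_add_cong) simp
    with \<open>a \<in> {..<N}\<close> \<open>b \<in> {..<N}\<close> show "a = b"
      by simp
  qed
  moreover have "cyclic_offset N k ` {..<N} \<subseteq> {..<N}"
    using cyclic_offset_less[OF assms] by auto
  ultimately show ?thesis
    by (simp add: bij_betw_def endo_inj_surj)
qed

lemma cyclic_offset_self_eq_0 [simp]: "cyclic_offset N k k = 0"
  by (simp add: cyclic_offset_def)

lemma cyclic_offset_Suc_self: "N > 0 \<Longrightarrow> cyclic_offset N (Suc k) k = N - 1"
  by (simp add: cyclic_offset_def zmod_minus1 nat_diff_distrib)

lemma cyclic_offset_N: "cyclic_offset N N j = cyclic_offset N 0 j"
  by (simp add: cyclic_offset_def)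

lemma cyclic_offset_Suc:
  assumes "j < N" "k < N" "j \<noteq> k"
  shows "cyclic_offset N k j = Suc (cyclic_offset N (Suc k) j)"
proof -
  define r where "r = (int j - int (Suc k)) mod int N"
  have r: "0 \<le> r" "r < int N" using assms unfolding r_def by simp_all
  have shift: "(int j - int k) mod int N = (r + 1) mod int N"
    unfolding r_def by (simp add: mod_add_left_eq)
  have "r + 1 \<noteq> int N"
  proof
    assume "r + 1 = int N"
    with shift have "int N dvd int j - int k"
      by (simp add: mod_eq_0_iff_dvd)
    moreover have "\<bar>int j - int k\<bar> < int N" "int j - int k \<noteq> 0"
      using assms by auto
    ultimately show False
      using dvd_imp_le_int by (metis abs_of_nat not_le)
  qed
  with r shift have "(int j - int k) mod int N = r + 1"
    by simp
  moreover have "nat (r + 1) = Suc (nat r)"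
    using r by (simp add: nat_add_distrib)
  ultimately show ?thesis
    by (simp add: cyclic_offset_def r_def)
qed

text \<open>Row k of this circulant is the coefficient vector of the identifier with shift k,
  read on the non-anchor positions.\<close>
definition pow2_circulant :: "nat \<Rightarrow> nat \<Rightarrow> nat \<Rightarrow> rat" where
  "pow2_circulant N k j = 2 ^ (N - 1 - cyclic_offset N k j)"

lemma pow2_circulant_N: "pow2_circulant N N = pow2_circulant N 0"
  by (simp add: pow2_circulant_def cyclic_offset_N fun_eq_iff)

lemma pow2_circulant_Suc:
  assumes "i < N" "j < N"
  shows "pow2_circulant N (Suc i) j - 2 * pow2_circulant N i j = (if j = i then 1 - 2 ^ N else 0)"
proof (cases "j = i")
  case True
  with assms have "2 * (2::rat) ^ (N - 1) = 2 ^ N"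
    by (simp flip: power_Suc)
  with True assms show ?thesis
    by (simp add: pow2_circulant_def cyclic_offset_Suc_self)
next
  case False
  with assms have "cyclic_offset N i j = Suc (cyclic_offset N (Suc i) j)"
    by (simp add: cyclic_offset_Suc)
  moreover have "cyclic_offset N i j < N"
    using assms by (simp add: cyclic_offset_less)
  ultimately have "N - 1 - cyclic_offset N (Suc i) j = Suc (N - 1 - cyclic_offset N i j)"
    by linarith
  with False show ?thesis
    by (simp add: pow2_circulant_def)
qed

lemma sum_pow2_circulant:
  assumes "N > 0"
  shows "(\<Sum>j<N. pow2_circulant N k j) = 2 ^ N - 1"
proof -
  have "(\<Sum>j<N. pow2_circulant N k j) = (\<Sum>d<N. (2::rat) ^ (N - 1 - d))"
    unfolding pow2_circulant_def
    using sum.reindex_bij_betw[OF bij_betw_cyclic_offset[OF assms], of "\<lambda>d. (2::rat) ^ (N - 1 - d)"]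
    by simp
  also have "\<dots> = (\<Sum>d<N. 2 ^ d)"
    using sum.nat_diff_reindex[of "\<lambda>d. (2::rat) ^ d" N] by simp
  also have "\<dots> = 2 ^ N - 1"
    by (induction N) simp_all
  finally show ?thesis .
qed

lemma pow2_circulant_system:
  assumes "N > 0" and rows: "\<And>i. i < N \<Longrightarrow> (\<Sum>j<N. pow2_circulant N i j * y j) = a"
    and "i < N"
  shows "(2 ^ N - 1) * y i = a"
proof -
  let ?F = "\<lambda>i. \<Sum>j<N. pow2_circulant N i j * y j"
  have "?F (Suc i) = a"
  proof (cases "Suc i < N")
    case False
    with \<open>i < N\<close> have "Suc i = N" by simp
    then show ?thesis
      using rows[of 0] assms(1) by (simp add: pow2_circulant_N)
  qed (rule rows)
  moreover have "?F (Suc i) - 2 * ?F i = (1 - 2 ^ N) * y i"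
  proof -
    have "?F (Suc i) - 2 * ?F i = (\<Sum>j<N. (pow2_circulant N (Suc i) j - 2 * pow2_circulant N i j) * y j)"
      by (simp add: sum_distrib_left sum_subtractf algebra_simps)
    also have "\<dots> = (\<Sum>j<N. if j = i then (1 - 2 ^ N) * y j else 0)"
      using pow2_circulant_Suc[OF \<open>i < N\<close>] by (intro sum.cong) auto
    finally show ?thesis
      using \<open>i < N\<close> by simp
  qed
  ultimately show ?thesis
    using rows[OF \<open>i < N\<close>] by (simp add: algebra_simps)
qed

definition skip_index :: "nat \<Rightarrow> nat \<Rightarrow> nat" where
  "skip_index a j = (if j < a then j else Suc j)"

lemma bij_betw_skip_index:
  assumes "a \<le> N"
  shows "bij_betw (skip_index a) {..<N} ({..<Suc N} - {a})"
  by (rule bij_betw_byWitness[where f' = "\<lambda>j. if j < a then j else j - 1"])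
    (use assms in \<open>auto simp: skip_index_def\<close>)

lemma sum_lessThan_Suc_skip_index:
  assumes "a \<le> N"
  shows "(\<Sum>j<Suc N. h j) = h a + (\<Sum>j<N. h (skip_index a j))"
proof -
  have "(\<Sum>j<Suc N. h j) = h a + sum h ({..<Suc N} - {a})"
    using assms by (subst sum.remove[of _ a]) auto
  also have "sum h ({..<Suc N} - {a}) = (\<Sum>j<N. h (skip_index a j))"
    using sum.reindex_bij_betw[OF bij_betw_skip_index[OF assms], of h] by simp
  finally show ?thesis .
qed

lemma coef_ident_anchor: "coef (Suc N) (ident (Suc N) G k) G = 2 ^ N"
  by (simp add: coef_def ident_def)

lemma coef_ident_less:
  assumes "p \<noteq> G" "N > 0"
  shows "coef (Suc N) (ident (Suc N) G k) p < 2 ^ N"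
  using assms by (simp add: coef_def ident_def Let_def)

lemma coef_ident_skip_index:
  assumes "1 \<le> G"
  shows "coef (Suc N) (ident (Suc N) G k) (Suc (skip_index (G - 1) j)) = pow2_circulant N k j"
  using assms by (auto simp: coef_def ident_def skip_index_def pow2_circulant_def cyclic_offset_def Let_def)

lemma sum_coef_ident:
  assumes "G \<in> {1..Suc N}"
  shows "(\<Sum>j<Suc N. coef (Suc N) (ident (Suc N) G k) (Suc j) * u j)
    = 2 ^ N * u (G - 1) + (\<Sum>j<N. pow2_circulant N k j * u (skip_index (G - 1) j))"
proof -
  from assms have "G - 1 \<le> N" "Suc (G - 1) = G"
    by auto
  then show ?thesis
    using assms
    by (simp only: sum_lessThan_Suc_skip_index coef_ident_anchor coef_ident_skip_index)
qed

lemma group_kernel_const_off_anchor: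
  assumes "N > 0" "G \<in> {1..Suc N}"
    and rows: "\<And>i. i < N \<Longrightarrow> (\<Sum>j<Suc N. coef (Suc N) (ident (Suc N) G i) (Suc j) * u j) = 0"
    and "j < Suc N" "j \<noteq> G - 1"
  shows "(2 ^ N - 1) * u j = - (2 ^ N * u (G - 1))"
proof -
  have "j \<in> skip_index (G - 1) ` {..<N}"
    using bij_betw_imp_surj_on[OF bij_betw_skip_index[of "G - 1" N]] assms by auto
  then obtain j' where "j' < N" "j = skip_index (G - 1) j'"
    by blast
  moreover have "(\<Sum>j<N. pow2_circulant N i j * u (skip_index (G - 1) j)) = - (2 ^ N * u (G - 1))"
    if "i < N" for i
    using rows[OF that] sum_coef_ident[OF assms(2)] by (simp add: eq_neg_iff_add_eq_0 add.commute)
  ultimately show ?thesis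
    using pow2_circulant_system[OF \<open>N > 0\<close>, of "\<lambda>j. u (skip_index (G - 1) j)"] by blast
qed

lemma coef_rows_kernel:
  assumes "N > 0" "g \<in> {1..Suc N}" "g' \<in> {1..Suc N}" "g' \<noteq> g" "k' < N"
    and group: "\<And>i. i < N \<Longrightarrow> (\<Sum>j<Suc N. coef (Suc N) (ident (Suc N) g i) (Suc j) * u j) = 0"
    and foreign: "(\<Sum>j<Suc N. coef (Suc N) (ident (Suc N) g' k') (Suc j) * u j) = 0"
    and "j < Suc N"
  shows "u j = 0"
proof -
  define P :: rat where "P = 2 ^ N"
  define x where "x = u (g - 1)"
  define c where "c = - (P * x) / (P - 1)"
  define B where "B = (\<lambda>j. coef (Suc N) (ident (Suc N) g' k') (Suc j))"
  have "P \<ge> 2"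
    using power_increasing[of 1 N "2::rat"] \<open>N > 0\<close> unfolding P_def by simp
  then have c: "(P - 1) * c = - (P * x)"
    unfolding c_def by simp
  have u_const: "u j = c" if "j < Suc N" "j \<noteq> g - 1" for j
  proof -
    have "(P - 1) * u j = (P - 1) * c"
      using group_kernel_const_off_anchor[OF assms(1,2) group that] c
      unfolding P_def x_def by simp
    with \<open>P \<ge> 2\<close> show ?thesis
      by simp
  qed
  have "g - 1 \<in> {..<Suc N}"
    using assms(2) by auto
  have sum_B: "(\<Sum>j<Suc N. B j) = 2 * P - 1"
    using sum_coef_ident[OF assms(3), of k' "\<lambda>_. 1"] sum_pow2_circulant[OF \<open>N > 0\<close>]
    unfolding B_def P_def by simp
  have "0 = (\<Sum>j<Suc N. B j * u j)"
    using foreign unfolding B_def by simp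
  also have "\<dots> = B (g - 1) * x + (\<Sum>j\<in>{..<Suc N} - {g - 1}. B j * u j)"
    unfolding x_def by (rule sum.remove) (use \<open>g - 1 \<in> {..<Suc N}\<close> in simp_all)
  also have "\<dots> = B (g - 1) * x + (\<Sum>j\<in>{..<Suc N} - {g - 1}. c * B j)"
    using u_const by (intro arg_cong2[where f = "(+)"] sum.cong) auto
  also have "\<dots> = B (g - 1) * x + c * (2 * P - 1 - B (g - 1))"
    using sum_B \<open>g - 1 \<in> {..<Suc N}\<close>
    by (simp add: sum_distrib_left[symmetric] sum_diff1 del: sum.lessThan_Suc)
  finally have "(P - 1) * (B (g - 1) * x + c * (2 * P - 1 - B (g - 1))) = 0"
    by simp
  moreover have "(P - 1) * (B (g - 1) * x + c * (2 * P - 1 - B (g - 1)))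
      = (P - 1) * B (g - 1) * x + (2 * P - 1 - B (g - 1)) * ((P - 1) * c)"
    by (simp add: algebra_simps)
  ultimately have "x * ((2 * P - 1) * (B (g - 1) - P)) = 0"
    unfolding c by (simp add: algebra_simps)
  moreover have "B (g - 1) < P"
    using coef_ident_less[of g g' N k'] assms unfolding B_def P_def by auto
  ultimately have "x = 0"
    using \<open>P \<ge> 2\<close> by simp
  then show ?thesis
    using u_const[OF \<open>j < Suc N\<close>] unfolding x_def c_def by (cases "j = g - 1") simp_all
qed

lemma code_matrix_mult_vec_nth:
  assumes "v \<in> carrier_vec M" "i < M"
  shows "(code_matrix M g g' k' *\<^sub>v v) $ i
    = (\<Sum>j<M. coef M (ident M (if i < M - 1 then g else g') (if i < M - 1 then i else k')) (Suc j) * v $ j)"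
  using assms by (auto simp: code_matrix_def scalar_prod_def lessThan_atLeast0 intro!: sum.cong)

lemma code_matrix_kernel:
  assumes "M \<ge> 2" "g \<in> {1..M}" "g' \<in> {1..M}" "g' \<noteq> g" "k' \<le> M - 2"
    and "v \<in> carrier_vec M" "code_matrix M g g' k' *\<^sub>v v = 0\<^sub>v M"
  shows "v = 0\<^sub>v M"
proof -
  obtain N where M: "M = Suc N" "N > 0"
    using \<open>M \<ge> 2\<close> by (cases M) auto
  have rows: "(\<Sum>j<M. coef M (ident M (if i < N then g else g') (if i < N then i else k')) (Suc j) * v $ j) = 0"
    if "i < M" for i
    using code_matrix_mult_vec_nth[OF assms(6) that, of g g' k'] assms(7) that M by simp
  have group: "(\<Sum>j<Suc N. coef (Suc N) (ident (Suc N) g i) (Suc j) * v $ j) = 0" if "i < N" for i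
    using rows[of i] that M by simp
  have foreign: "(\<Sum>j<Suc N. coef (Suc N) (ident (Suc N) g' k') (Suc j) * v $ j) = 0"
    using rows[of N] M by simp
  show ?thesis
  proof (rule eq_vecI)
    fix j assume "j < dim_vec (0\<^sub>v M)"
    then show "v $ j = 0\<^sub>v M $ j"
      using coef_rows_kernel[OF \<open>N > 0\<close> _ _ \<open>g' \<noteq> g\<close> _ group foreign] assms M by auto
  qed (use assms(6) in simp)
qed

theorem lemma2:
  fixes M g g' k' :: nat
  assumes "M \<ge> 2"
    and "g \<in> {1..M}" and "g' \<in> {1..M}" and "g' \<noteq> g"
    and "k' \<le> M - 2"
  shows "vec_space.rank M (code_matrix M g g' k') = M"
proof -
  have A: "code_matrix M g g' k' \<in> carrier_mat M M"
    by (simp add: code_matrix_def)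
  have "det (code_matrix M g g' k') \<noteq> 0"
    using code_matrix_kernel[OF assms] det_0_iff_vec_prod_zero_field[OF A] by blast
  then show ?thesis
    using vec_space.low_rank_det_zero[OF A] by blast
qed

end
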